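(* Assume (W1)–(W4) hold with an integer $M\ge1$ and $\alpha>1$. Then there exists an integer $j_0\ge0$ such that for all $j\ge j_0$ the trigonometric polynomial $H_j$ is not identically zero.
   Context: Fourier transform: $\hat g(\xi)=\int g(t)e^{-i\xi t}dt$. Conditions on $\phi,\psi\in L^2(\mathbb R)$: (W1) compactly supported, integrable, $\hat\phi(0)=1$, $\int\psi^2=1$; (W2) $\sup_\xi|\hat\psi(\xi)|(1+|\xi|)^\alpha<\infty$; (W3) $\int t^m\psi=0$ for $m<M$; (W4) for $m<M$, $t\mapsto\sum_kk^m\phi(t-k)$ is a polynomial of degree $m$. $h_{j,l}=2^{-j/2}\int\phi(t+l)\psi(2^{-j}t)dt$, $H_j(\lambda)=\sum_lh_{j,l}e^{-i\lambda l}$. *)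

theory Defs
  imports "HOL-Analysis.Analysis" "HOL-Computational_Algebra.Polynomial"
begin

definition fourier :: "(real \<Rightarrow> real) \<Rightarrow> real \<Rightarrow> complex" where
  "fourier g \<xi> = (LINT t|lborel. complex_of_real (g t) * exp (- (\<i> * complex_of_real (\<xi> * t))))"

definition L2 :: "(real \<Rightarrow> real) \<Rightarrow> bool" where
  "L2 g \<longleftrightarrow> g \<in> borel_measurable lborel \<and> integrable lborel (\<lambda>t. (g t)\<^sup>2)"

definition compactly_supported :: "(real \<Rightarrow> real) \<Rightarrow> bool" where
  "compactly_supported g \<longleftrightarrow> compact (closure {t. g t \<noteq> 0})"

definition hcoef :: "(real \<Rightarrow> real) \<Rightarrow> (real \<Rightarrow> real) \<Rightarrow> nat \<Rightarrow> int \<Rightarrow> real" where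
  "hcoef \<phi> \<psi> j l = 2 powr (- real j / 2) *
     (LINT t|lborel. \<phi> (t + real_of_int l) * \<psi> (2 powr (- real j) * t))"

definition Hpoly :: "(real \<Rightarrow> real) \<Rightarrow> (real \<Rightarrow> real) \<Rightarrow> nat \<Rightarrow> real \<Rightarrow> complex" where
  "Hpoly \<phi> \<psi> j lam = (\<Sum>\<^sub>\<infinity>l\<in>(UNIV::int set).
      complex_of_real (hcoef \<phi> \<psi> j l) * exp (- (\<i> * complex_of_real (lam * real_of_int l))))"

end

theory Submission
  imports Defs
begin

text \<open>If \<open>H\<^sub>j\<close> vanished identically for arbitrarily large \<open>j\<close>, so would its finitely many
  coefficients \<open>h\<^sub>j\<^sub>,\<^sub>l\<close>: \<open>\<psi>\<close> would be orthogonal to all dilated translates \<open>\<phi> (2^j s - k)\<close>.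
  These translates form a partition of unity (case \<open>m = 0\<close> of (W4) together with \<open>\<integral>\<phi> = 1\<close>),
  so the indicator of a half-line \<open>(a, \<infinity>)\<close> agrees with a finite sum of them except on an
  interval of length \<open>O(2^-j)\<close> around \<open>a\<close>. An AM-GM estimate then bounds the integral of \<open>\<psi>\<close>
  over \<open>(a, \<infinity>)\<close> by \<open>O(2^(-j/2))\<close>, so all half-line integrals of \<open>\<psi>\<close> vanish, whence \<open>\<psi> = 0\<close>
  almost everywhere, contradicting \<open>\<integral>\<psi>\<^sup>2 = 1\<close>.
  Only (W1) and the case \<open>m = 0\<close> of (W4) are needed.\<close>

lemma compactly_supported_imp_support_bound:
  assumes "compactly_supported g"
  obtains R :: nat where "\<And>t. g t \<noteq> 0 \<Longrightarrow> \<bar>t\<bar> \<le> real R"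
proof -
  have "bounded {t. g t \<noteq> 0}"
    using assms compact_imp_bounded bounded_subset closure_subset
    unfolding compactly_supported_def by blast
  then obtain B where "\<And>t. g t \<noteq> 0 \<Longrightarrow> \<bar>t\<bar> \<le> B"
    unfolding bounded_iff by auto
  moreover obtain R :: nat where "B \<le> real R"
    using real_arch_simple by blast
  ultimately show thesis
    using that order_trans by blast
qed

lemma infsum_eq_sum_if_zero_outside:
  fixes f :: "'a \<Rightarrow> 'b::{comm_monoid_add,t2_space}"
  assumes "finite F" "\<And>k. k \<notin> F \<Longrightarrow> f k = 0"
  shows "infsum f UNIV = sum f F"
proof -
  have "infsum f UNIV = infsum f F"
    by (rule infsum_cong_neutral) (use assms in auto)
  then show ?thesis
    using assms(1) by simp
qed

lemma translates_infsum_eq_sum: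
  fixes \<phi> :: "real \<Rightarrow> real" and R :: real
  assumes supp: "\<And>t. \<phi> t \<noteq> 0 \<Longrightarrow> \<bar>t\<bar> \<le> R"
    and G: "finite G" "\<And>k. \<bar>t - real_of_int k\<bar> \<le> R \<Longrightarrow> k \<in> G"
  shows "(\<Sum>\<^sub>\<infinity>k\<in>(UNIV::int set). \<phi> (t - real_of_int k)) = (\<Sum>k\<in>G. \<phi> (t - real_of_int k))"
  using G supp by (intro infsum_eq_sum_if_zero_outside) blast+

lemma integral_eq_translates_sum:
  fixes \<phi> :: "real \<Rightarrow> real" and R :: nat
  assumes int: "integrable lborel \<phi>"
    and supp: "\<And>t. \<phi> t \<noteq> 0 \<Longrightarrow> \<bar>t\<bar> \<le> real R"
    and const: "\<And>t. (\<Sum>\<^sub>\<infinity>k\<in>(UNIV::int set). \<phi> (t - real_of_int k)) = c"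
  shows "(LINT t|lborel. \<phi> t) = c"
proof -
  define K where "K = {-(int R + 1)..int R + 1}"
  define cell where "cell k = {- real_of_int k..<1 - real_of_int k}" for k
  have cell_iff: "t \<in> cell k \<longleftrightarrow> \<lfloor>t\<rfloor> = - k" for t k
    unfolding cell_def by (simp add: floor_eq_iff)
  have split: "\<phi> t = (\<Sum>k\<in>K. \<phi> t * indicator (cell k) t)" for t
  proof (cases "\<phi> t = 0")
    case False
    then have "\<lfloor>t\<rfloor> \<le> int R + 1" "- int R - 1 \<le> \<lfloor>t\<rfloor>"
      using supp[of t] by (auto simp: floor_le_iff le_floor_iff)
    then have "- \<lfloor>t\<rfloor> \<in> K"
      unfolding K_def by auto
    have "(\<Sum>k\<in>K. \<phi> t * indicator (cell k) t) = (\<Sum>k\<in>K. if k = - \<lfloor>t\<rfloor> then \<phi> t else 0)"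
      by (intro sum.cong) (auto simp: indicator_def cell_iff)
    with \<open>- \<lfloor>t\<rfloor> \<in> K\<close> show ?thesis
      by (simp add: K_def)
  qed simp
  have shift: "(LINT t|lborel. \<phi> t * indicator (cell k) t)
      = (LINT x|lborel. \<phi> (x - real_of_int k) * indicator {0..<1} x)" for k
    using lborel_integral_real_affine[of 1 "\<lambda>t. \<phi> t * indicator (cell k) t" "- real_of_int k"]
    by (simp add: cell_def indicator_def)
  have period: "(\<Sum>k\<in>K. \<phi> (x - real_of_int k)) = c" if "x \<in> {0..<1}" for x
  proof -
    have "(\<Sum>\<^sub>\<infinity>k\<in>(UNIV::int set). \<phi> (x - real_of_int k)) = (\<Sum>k\<in>K. \<phi> (x - real_of_int k))"
      by (rule translates_infsum_eq_sum[of \<phi> "real R", OF supp]) (use that in \<open>auto simp: K_def\<close>)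
    then show ?thesis
      using const by simp
  qed
  have int_shift: "integrable lborel (\<lambda>x. \<phi> (x - real_of_int k))" for k
    using lborel_integrable_real_affine[OF int, of 1 "- real_of_int k"] by simp
  have "(LINT t|lborel. \<phi> t) = (\<Sum>k\<in>K. LINT t|lborel. \<phi> t * indicator (cell k) t)"
    by (subst split) (simp add: int cell_def integrable_real_mult_indicator)
  also have "\<dots> = (LINT x|lborel. (\<Sum>k\<in>K. \<phi> (x - real_of_int k)) * indicator {0..<1} x)"
    by (simp add: shift sum_distrib_right int_shift integrable_real_mult_indicator)
  also have "\<dots> = (LINT x|lborel. c * indicator {0..<1::real} x)"
    by (rule Bochner_Integration.integral_cong) (auto simp: indicator_def period)
  finally show ?thesis
    by simp
qed

lemma has_integral_exp_int_period:
  fixes n :: int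
  shows "((\<lambda>x::real. exp (\<i> * of_int n * of_real x)) has_integral
           (if n = 0 then of_real (2 * pi) else 0)) {0..2 * pi}"
proof (cases "n = 0")
  case True
  then show ?thesis
    using has_integral_const_real[of "1::complex" 0 "2 * pi"] by (simp add: scaleR_conv_of_real)
next
  case False
  define G where "G z = exp (\<i> * of_int n * z) / (\<i> * of_int n)" for z :: complex
  have G': "(G has_field_derivative exp (\<i> * of_int n * z)) (at z)" for z
    unfolding G_def using False by (auto intro!: derivative_eq_intros)
  have "((\<lambda>x::real. exp (\<i> * of_int n * of_real x)) has_integral (G (of_real (2 * pi)) - G (of_real 0))) {0..2 * pi}"
    by (rule fundamental_theorem_of_calculus) (auto intro!: has_vector_derivative_real_field G')
  moreover have "exp (\<i> * of_int n * of_real (2 * pi)) = 1"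
    using exp_integer_2pi[of "of_int n"] by (simp add: algebra_simps)
  ultimately show ?thesis
    using False unfolding G_def by simp
qed

lemma trig_sum_eq_0_imp_coeff_eq_0:
  fixes c :: "int \<Rightarrow> complex"
  assumes F: "finite F" "m \<in> F"
    and zero: "\<And>lam. (\<Sum>l\<in>F. c l * exp (- (\<i> * of_real (lam * of_int l)))) = 0"
  shows "c m = 0"
proof -
  define f where "f lam = (\<Sum>l\<in>F. c l * exp (\<i> * of_int (m - l) * of_real lam))" for lam :: real
  have "f lam = (\<Sum>l\<in>F. c l * exp (- (\<i> * of_real (lam * of_int l)))) * exp (\<i> * of_int m * of_real lam)"
    for lam
  proof -
    have "exp (\<i> * of_int (m - l) * of_real lam)
        = exp (- (\<i> * of_real (lam * of_int l))) * exp (\<i> * of_int m * of_real lam)" for l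
      by (simp add: exp_add[symmetric] algebra_simps)
    then show ?thesis
      unfolding f_def sum_distrib_right by (simp add: mult.assoc)
  qed
  then have "f = (\<lambda>_. 0)"
    using zero by (simp add: fun_eq_iff)
  then have "(f has_integral 0) {0..2 * pi}"
    by (simp add: has_integral_0)
  moreover have "(f has_integral (\<Sum>l\<in>F. c l * (if m - l = 0 then of_real (2 * pi) else 0))) {0..2 * pi}"
    unfolding f_def by (intro has_integral_sum F has_integral_mult_right has_integral_exp_int_period)
  moreover have "(\<Sum>l\<in>F. c l * (if m - l = 0 then of_real (2 * pi) else 0)) = c m * of_real (2 * pi)"
  proof -
    have "(\<Sum>l\<in>F. c l * (if m - l = 0 then of_real (2 * pi) else 0))
        = (\<Sum>l\<in>F. if l = m then c l * of_real (2 * pi) else 0)"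
      by (intro sum.cong) auto
    then show ?thesis
      using F by simp
  qed
  ultimately have "c m * of_real (2 * pi) = 0"
    using has_integral_unique by metis
  then show ?thesis
    by simp
qed

lemma hcoef_eq_0_if_far:
  fixes \<phi> \<psi> :: "real \<Rightarrow> real" and R B :: real
  assumes supp\<phi>: "\<And>t. \<phi> t \<noteq> 0 \<Longrightarrow> \<bar>t\<bar> \<le> R"
    and supp\<psi>: "\<And>t. \<psi> t \<noteq> 0 \<Longrightarrow> \<bar>t\<bar> \<le> B"
    and far: "R + 2 powr real j * B < \<bar>real_of_int l\<bar>"
  shows "hcoef \<phi> \<psi> j l = 0"
proof -
  have "\<phi> (t + real_of_int l) * \<psi> (2 powr (- real j) * t) = 0" for t
  proof (rule ccontr)
    assume "\<phi> (t + real_of_int l) * \<psi> (2 powr (- real j) * t) \<noteq> 0"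
    then have "\<bar>t + real_of_int l\<bar> \<le> R" and "\<bar>2 powr (- real j) * t\<bar> \<le> B"
      using supp\<phi> supp\<psi> by auto
    moreover have "\<bar>t\<bar> = 2 powr real j * \<bar>2 powr (- real j) * t\<bar>"
      by (simp add: abs_mult powr_minus)
    ultimately have "\<bar>t\<bar> \<le> 2 powr real j * B"
      by (metis mult_left_mono powr_ge_zero)
    with \<open>\<bar>t + real_of_int l\<bar> \<le> R\<close> far show False
      by linarith
  qed
  then have "(\<lambda>t. \<phi> (t + real_of_int l) * \<psi> (2 powr (- real j) * t)) = (\<lambda>t. 0)"
    by (rule ext)
  then show ?thesis
    unfolding hcoef_def by simp
qed

lemma Hpoly_eq_0_imp_hcoef_eq_0:
  fixes \<phi> \<psi> :: "real \<Rightarrow> real" and R B :: real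
  assumes supp\<phi>: "\<And>t. \<phi> t \<noteq> 0 \<Longrightarrow> \<bar>t\<bar> \<le> R"
    and supp\<psi>: "\<And>t. \<psi> t \<noteq> 0 \<Longrightarrow> \<bar>t\<bar> \<le> B"
    and H: "\<And>lam. Hpoly \<phi> \<psi> j lam = 0"
  shows "hcoef \<phi> \<psi> j l = 0"
proof -
  obtain N :: nat where N: "R + 2 powr real j * B < real N"
    using reals_Archimedean2 by blast
  define F where "F = {- int N..int N}"
  have outside: "hcoef \<phi> \<psi> j k = 0" if "k \<notin> F" for k
    using that N by (intro hcoef_eq_0_if_far[OF supp\<phi> supp\<psi>]) (auto simp: F_def)
  show ?thesis
  proof (cases "l \<in> F")
    case True
    have "Hpoly \<phi> \<psi> j lam =
        (\<Sum>k\<in>F. complex_of_real (hcoef \<phi> \<psi> j k) * exp (- (\<i> * of_real (lam * of_int k))))" for lam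
      unfolding Hpoly_def by (rule infsum_eq_sum_if_zero_outside) (auto simp: F_def outside)
    then show ?thesis
      using trig_sum_eq_0_imp_coeff_eq_0[of F l "\<lambda>k. complex_of_real (hcoef \<phi> \<psi> j k)"] True H
      by (simp add: F_def)
  qed (rule outside)
qed

lemma hcoef_eq_integral_dilated:
  fixes \<phi> \<psi> :: "real \<Rightarrow> real"
  shows "hcoef \<phi> \<psi> j l =
    2 powr (real j / 2) * (LINT s|lborel. \<psi> s * \<phi> (2 powr real j * s + real_of_int l))"
proof -
  define J :: real where "J = 2 powr real j"
  have J: "J > 0"
    unfolding J_def by simp
  have undilate: "\<phi> (0 + J * s + real_of_int l) * \<psi> (2 powr (- real j) * (0 + J * s))
      = \<psi> s * \<phi> (J * s + real_of_int l)" for s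
  proof -
    have J_cancel: "2 powr (- real j) * (J * s) = s"
      unfolding J_def by (simp add: powr_minus field_simps)
    show ?thesis
      unfolding add_0_left J_cancel by (rule mult.commute)
  qed
  have "(LINT t|lborel. \<phi> (t + real_of_int l) * \<psi> (2 powr (- real j) * t))
      = \<bar>J\<bar> *\<^sub>R (LINT s|lborel. \<phi> (0 + J * s + real_of_int l) * \<psi> (2 powr (- real j) * (0 + J * s)))"
    using J by (intro lborel_integral_real_affine) simp
  also have "\<dots> = J * (LINT s|lborel. \<psi> s * \<phi> (J * s + real_of_int l))"
    using J by (simp only: undilate real_scaleR_def abs_of_pos)
  finally have "hcoef \<phi> \<psi> j l = 2 powr (- real j / 2) * J * (LINT s|lborel. \<psi> s * \<phi> (J * s + real_of_int l))"
    unfolding hcoef_def by (simp only: mult.assoc)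
  moreover have "2 powr (- real j / 2) * J = 2 powr (real j / 2)"
    unfolding J_def by (simp flip: powr_add)
  ultimately show ?thesis
    unfolding J_def by simp
qed

lemma orthogonal_dilates_if_Hpoly_frequently_eq_0:
  fixes \<phi> \<psi> :: "real \<Rightarrow> real" and R B :: real
  assumes supp\<phi>: "\<And>t. \<phi> t \<noteq> 0 \<Longrightarrow> \<bar>t\<bar> \<le> R" and supp\<psi>: "\<And>t. \<psi> t \<noteq> 0 \<Longrightarrow> \<bar>t\<bar> \<le> B"
    and vanishing: "\<And>j0. \<exists>j\<ge>j0. \<forall>lam. Hpoly \<phi> \<psi> j lam = 0"
  shows "\<exists>J > real n. \<forall>k::int. (LINT s|lborel. \<psi> s * \<phi> (J * s - real_of_int k)) = 0"
proof -
  obtain j where "n \<le> j" and H: "\<And>lam. Hpoly \<phi> \<psi> j lam = 0"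
    using vanishing by blast
  have "real n \<le> real j"
    using \<open>n \<le> j\<close> by simp
  also have "\<dots> < 2 ^ j"
    by (rule of_nat_less_two_power)
  also have "\<dots> = 2 powr real j"
    by (simp add: powr_realpow)
  finally have "real n < 2 powr real j" .
  moreover have "(LINT s|lborel. \<psi> s * \<phi> (2 powr real j * s - real_of_int k)) = 0" for k
    using hcoef_eq_integral_dilated[of \<phi> \<psi> j "- k"] Hpoly_eq_0_imp_hcoef_eq_0[OF supp\<phi> supp\<psi> H, of "- k"]
    by simp
  ultimately show ?thesis
    by blast
qed

lemma abs_mult_le_weighted_squares:
  fixes a b t :: real
  assumes "t > 0"
  shows "\<bar>a * b\<bar> \<le> (t * a\<^sup>2 + b\<^sup>2 / t) / 2"
proof -
  have "0 \<le> (t * \<bar>a\<bar> - \<bar>b\<bar>)\<^sup>2 / t"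
    using assms by simp
  then show ?thesis
    using assms by (simp add: power2_eq_square field_simps abs_mult)
qed

lemma integrable_mult_if_square_integrable:
  fixes f g :: "'a \<Rightarrow> real"
  assumes "f \<in> borel_measurable M" "integrable M (\<lambda>x. (f x)\<^sup>2)"
    and "g \<in> borel_measurable M" "integrable M (\<lambda>x. (g x)\<^sup>2)"
  shows "integrable M (\<lambda>x. f x * g x)"
proof (rule Bochner_Integration.integrable_bound)
  show "integrable M (\<lambda>x. (f x)\<^sup>2 + (g x)\<^sup>2)"
    using assms by simp
  have "norm (f x * g x) \<le> norm ((f x)\<^sup>2 + (g x)\<^sup>2)" for x
  proof -
    have "\<bar>f x * g x\<bar> \<le> ((f x)\<^sup>2 + (g x)\<^sup>2) / 2"
      using abs_mult_le_weighted_squares[of 1 "f x" "g x"] by simp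
    also have "\<dots> \<le> (f x)\<^sup>2 + (g x)\<^sup>2"
      by simp
    finally show ?thesis
      by simp
  qed
  then show "AE x in M. norm (f x * g x) \<le> norm ((f x)\<^sup>2 + (g x)\<^sup>2)"
    by (intro AE_I2)
qed (use assms in measurable)

lemma abs_integral_mult_le:
  fixes f g :: "'a \<Rightarrow> real"
  assumes "f \<in> borel_measurable M" "integrable M (\<lambda>x. (f x)\<^sup>2)"
    and "g \<in> borel_measurable M" "integrable M (\<lambda>x. (g x)\<^sup>2)"
    and t: "t > 0"
  shows "\<bar>LINT x|M. f x * g x\<bar> \<le> (t * (LINT x|M. (f x)\<^sup>2) + (LINT x|M. (g x)\<^sup>2) / t) / 2"
proof -
  have "integrable M (\<lambda>x. f x * g x)"
    using assms(1-4) by (rule integrable_mult_if_square_integrable)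
  then have "\<bar>LINT x|M. f x * g x\<bar> \<le> (LINT x|M. (t * (f x)\<^sup>2 + (g x)\<^sup>2 / t) / 2)"
    using assms abs_mult_le_weighted_squares[OF t]
    by (intro order_trans[OF integral_abs_bound] integral_mono) auto
  also have "\<dots> = (t * (LINT x|M. (f x)\<^sup>2) + (LINT x|M. (g x)\<^sup>2) / t) / 2"
    using assms by simp
  finally show ?thesis .
qed

lemma power2_indicator [simp]: "(indicator S x :: real)\<^sup>2 = indicator S x"
  by (simp add: indicator_def)

lemma
  fixes f :: "'a \<Rightarrow> real"
  assumes f: "f \<in> borel_measurable M" "integrable M (\<lambda>x. (f x)\<^sup>2)" and S: "S \<in> sets M"
  shows integrable_square_mult_indicator: "integrable M (\<lambda>x. (f x * indicator S x)\<^sup>2)"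
    and integral_square_mult_indicator_le: "(LINT x|M. (f x * indicator S x)\<^sup>2) \<le> (LINT x|M. (f x)\<^sup>2)"
proof -
  have sq: "(f x * indicator S x)\<^sup>2 = (f x)\<^sup>2 * indicator S x" for x
    by (simp add: power_mult_distrib)
  show int: "integrable M (\<lambda>x. (f x * indicator S x)\<^sup>2)"
    unfolding sq by (rule integrable_real_mult_indicator[OF S f(2)])
  show "(LINT x|M. (f x * indicator S x)\<^sup>2) \<le> (LINT x|M. (f x)\<^sup>2)"
    using int f(2) by (intro integral_mono) (auto simp: sq indicator_def)
qed

lemma
  fixes \<phi> :: "real \<Rightarrow> real" and J c :: real
  assumes J: "J > 0"
  shows integral_square_dilated: "(LINT x|lborel. (\<phi> (J * x - c))\<^sup>2) = (LINT x|lborel. (\<phi> x)\<^sup>2) / J"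
    and integrable_square_dilated:
      "integrable lborel (\<lambda>x. (\<phi> x)\<^sup>2) \<Longrightarrow> integrable lborel (\<lambda>x. (\<phi> (J * x - c))\<^sup>2)"
proof -
  have shifted: "(\<lambda>x. (\<phi> (- c + J * x))\<^sup>2) = (\<lambda>x. (\<phi> (J * x - c))\<^sup>2)"
    by (simp add: algebra_simps)
  show "(LINT x|lborel. (\<phi> (J * x - c))\<^sup>2) = (LINT x|lborel. (\<phi> x)\<^sup>2) / J"
    using lborel_integral_real_affine[of J "\<lambda>x. (\<phi> x)\<^sup>2" "- c"] J by (simp add: shifted)
  show "integrable lborel (\<lambda>x. (\<phi> (J * x - c))\<^sup>2)" if "integrable lborel (\<lambda>x. (\<phi> x)\<^sup>2)"
    using lborel_integrable_real_affine[OF that, of J "- c"] J by (simp add: shifted)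
qed

lemma mem_floor_interval_iff:
  fixes x y :: real and k m :: int
  shows "k \<in> {\<lfloor>x\<rfloor> + 1..\<lfloor>y\<rfloor> + m} \<longleftrightarrow> x < real_of_int k \<and> real_of_int k \<le> y + of_int m"
proof -
  have "k \<in> {\<lfloor>x\<rfloor> + 1..\<lfloor>y\<rfloor> + m} \<longleftrightarrow> \<lfloor>x\<rfloor> < k \<and> k - m \<le> \<lfloor>y\<rfloor>"
    by auto
  then show ?thesis
    by (simp add: floor_less_iff le_floor_iff algebra_simps)
qed

text \<open>The dilates \<open>\<phi> (J * s - k)\<close> are supported in windows of radius \<open>R / J\<close>, so outside
  \<open>[a - \<delta>, a + \<delta>]\<close> the partition of unity cuts cleanly at \<open>a\<close>: those with \<open>k > J * a\<close> sum to
  the indicator of \<open>(a, \<infinity>)\<close>. The bound \<open>A\<close> only serves to make the sum finite.\<close>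

lemma indicator_greaterThan_eq_translates_sum:
  fixes \<phi> :: "real \<Rightarrow> real" and R :: nat and J a s A :: real
  assumes supp: "\<And>t. \<phi> t \<noteq> 0 \<Longrightarrow> \<bar>t\<bar> \<le> real R"
    and unity: "\<And>t. (\<Sum>\<^sub>\<infinity>k\<in>(UNIV::int set). \<phi> (t - real_of_int k)) = 1"
    and J: "J > 0" and s: "s \<le> A"
  defines "\<delta> \<equiv> (real R + 1) / J"
  shows "indicator {a<..} s =
      (\<Sum>k\<in>{\<lfloor>J * a\<rfloor> + 1..\<lfloor>J * A\<rfloor> + int R + 1}. \<phi> (J * s - real_of_int k))
      + indicator {a<..a + \<delta>} s
      - indicator {a - \<delta>..a + \<delta>} s *
          (\<Sum>k\<in>{\<lfloor>J * a\<rfloor> + 1..\<lfloor>J * a\<rfloor> + 2 * int R + 1}. \<phi> (J * s - real_of_int k))"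
    (is "_ = (\<Sum>k\<in>?G. _) + _ - _ * (\<Sum>k\<in>?N. _)")
proof -
  have G: "k \<in> ?G \<longleftrightarrow> J * a < real_of_int k \<and> real_of_int k \<le> J * A + real R + 1" for k
    using mem_floor_interval_iff[where x = "J * a" and y = "J * A" and m = "int R + 1"] by (simp add: add.assoc)
  have N: "k \<in> ?N \<longleftrightarrow> J * a < real_of_int k \<and> real_of_int k \<le> J * a + 2 * real R + 1" for k
    using mem_floor_interval_iff[where x = "J * a" and y = "J * a" and m = "2 * int R + 1"] by (simp add: add.assoc)
  have far: "\<phi> (J * s - real_of_int k) = 0" if "real R < \<bar>J * s - real_of_int k\<bar>" for k
    using supp that by (meson not_le)
  have J\<delta>: "J * \<delta> = real R + 1" and "\<delta> > 0"
    using J unfolding \<delta>_def by simp_all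
  have "J * s \<le> J * A"
    using J s by simp
  consider (below) "s < a - \<delta>" | (middle) "a - \<delta> \<le> s" "s \<le> a + \<delta>" | (above) "a + \<delta> < s"
    by linarith
  then show ?thesis
  proof cases
    case below
    then have "J * s < J * (a - \<delta>)"
      using J by simp
    then have "J * s < J * a - (real R + 1)"
      using J\<delta> by (simp add: right_diff_distrib)
    then have "\<phi> (J * s - real_of_int k) = 0" if "k \<in> ?G" for k
      using that G[of k] by (intro far) linarith
    then show ?thesis
      using below \<open>\<delta> > 0\<close> by simp
  next
    case middle
    then have "J * s \<le> J * (a + \<delta>)"
      using J by simp
    then have "J * s \<le> J * a + (real R + 1)"
      using J\<delta> by (simp add: distrib_left)
    then have "(\<Sum>k\<in>?G. \<phi> (J * s - real_of_int k)) = (\<Sum>k\<in>?N. \<phi> (J * s - real_of_int k))"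
    proof (intro sum.mono_neutral_cong)
      show "\<phi> (J * s - real_of_int k) = 0" if "k \<in> ?N - ?G" for k
        using that G[of k] N[of k] \<open>J * s \<le> J * A\<close> by (intro far) auto
      show "\<phi> (J * s - real_of_int k) = 0" if "k \<in> ?G - ?N" for k
        using that G[of k] N[of k] \<open>J * s \<le> J * a + (real R + 1)\<close> by (intro far) auto
    qed auto
    then show ?thesis
      using middle by (simp add: indicator_def)
  next
    case above
    then have "J * (a + \<delta>) < J * s"
      using J by simp
    then have "J * a + (real R + 1) < J * s"
      using J\<delta> by (simp add: distrib_left)
    then have "(\<Sum>\<^sub>\<infinity>k\<in>(UNIV::int set). \<phi> (J * s - real_of_int k)) = (\<Sum>k\<in>?G. \<phi> (J * s - real_of_int k))"
      using G \<open>J * s \<le> J * A\<close> by (intro translates_infsum_eq_sum[of \<phi> "real R", OF supp]) force+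
    then show ?thesis
      using above \<open>\<delta> > 0\<close> unity by simp
  qed
qed

lemma integral_greaterThan_eq_boundary_terms:
  fixes \<phi> \<psi> :: "real \<Rightarrow> real" and R :: nat and A J a :: real
  assumes \<phi>: "\<phi> \<in> borel_measurable lborel" "integrable lborel (\<lambda>t. (\<phi> t)\<^sup>2)"
    and supp\<phi>: "\<And>t. \<phi> t \<noteq> 0 \<Longrightarrow> \<bar>t\<bar> \<le> real R"
    and unity: "\<And>t. (\<Sum>\<^sub>\<infinity>k\<in>(UNIV::int set). \<phi> (t - real_of_int k)) = 1"
    and \<psi>: "\<psi> \<in> borel_measurable lborel" "integrable lborel (\<lambda>t. (\<psi> t)\<^sup>2)"
    and supp\<psi>: "\<And>s. \<psi> s \<noteq> 0 \<Longrightarrow> s \<le> A"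
    and J: "J > 0"
    and orth: "\<And>k::int. (LINT s|lborel. \<psi> s * \<phi> (J * s - real_of_int k)) = 0"
  defines "\<delta> \<equiv> (real R + 1) / J"
  shows "(LINT s|lborel. \<psi> s * indicator {a<..} s) =
      (LINT s|lborel. \<psi> s * indicator {a<..a + \<delta>} s)
      - (\<Sum>k\<in>{\<lfloor>J * a\<rfloor> + 1..\<lfloor>J * a\<rfloor> + 2 * int R + 1}.
           LINT s|lborel. \<psi> s * indicator {a - \<delta>..a + \<delta>} s * \<phi> (J * s - real_of_int k))"
proof -
  define G where "G = {\<lfloor>J * a\<rfloor> + 1..\<lfloor>J * A\<rfloor> + int R + 1}"
  define N where "N = {\<lfloor>J * a\<rfloor> + 1..\<lfloor>J * a\<rfloor> + 2 * int R + 1}"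
  define E where "E = {a - \<delta>..a + \<delta>}"
  note [measurable] = \<phi>(1) \<psi>(1)
  have decomp: "\<psi> s * indicator {a<..} s =
      (\<Sum>k\<in>G. \<psi> s * \<phi> (J * s - real_of_int k)) + \<psi> s * indicator {a<..a + \<delta>} s
      - (\<Sum>k\<in>N. \<psi> s * indicator E s * \<phi> (J * s - real_of_int k))" for s
  proof (cases "\<psi> s = 0")
    case False
    have "indicator {a<..} s = (\<Sum>k\<in>G. \<phi> (J * s - real_of_int k)) + indicator {a<..a + \<delta>} s
        - indicator E s * (\<Sum>k\<in>N. \<phi> (J * s - real_of_int k))"
      using indicator_greaterThan_eq_translates_sum[OF supp\<phi> unity J supp\<psi>[OF False], of a]
      unfolding G_def N_def E_def \<delta>_def .
    then show ?thesis
      by (simp only: right_diff_distrib distrib_left mult.assoc[symmetric] sum_distrib_left)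
  qed simp
  have \<phi>\<^sub>k: "integrable lborel (\<lambda>s. (\<phi> (J * s - real_of_int k))\<^sup>2)" for k
    using J \<phi>(2) by (rule integrable_square_dilated)
  have "integrable lborel (\<lambda>s. \<psi> s * \<phi> (J * s - real_of_int k))" for k
    by (rule integrable_mult_if_square_integrable[OF \<psi> _ \<phi>\<^sub>k]) measurable
  moreover have "integrable lborel (\<lambda>s. \<psi> s * indicator {a<..a + \<delta>} s)"
    using J by (intro integrable_mult_if_square_integrable[OF \<psi>]) (simp_all add: integrable_indicator_iff \<delta>_def)
  moreover have "integrable lborel (\<lambda>s. \<psi> s * indicator E s * \<phi> (J * s - real_of_int k))" for k
    by (rule integrable_mult_if_square_integrable[OF _ integrable_square_mult_indicator[OF \<psi>] _ \<phi>\<^sub>k])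
      (simp_all add: E_def)
  ultimately have "(LINT s|lborel. \<psi> s * indicator {a<..} s) =
      (\<Sum>k\<in>G. LINT s|lborel. \<psi> s * \<phi> (J * s - real_of_int k))
      + (LINT s|lborel. \<psi> s * indicator {a<..a + \<delta>} s)
      - (\<Sum>k\<in>N. LINT s|lborel. \<psi> s * indicator E s * \<phi> (J * s - real_of_int k))"
    by (simp add: decomp)
  then show ?thesis
    using orth by (simp add: N_def E_def)
qed

lemma abs_integral_greaterThan_le:
  fixes \<phi> \<psi> :: "real \<Rightarrow> real" and R :: nat and A J a :: real
  assumes \<phi>: "\<phi> \<in> borel_measurable lborel" "integrable lborel (\<lambda>t. (\<phi> t)\<^sup>2)"
    and supp\<phi>: "\<And>t. \<phi> t \<noteq> 0 \<Longrightarrow> \<bar>t\<bar> \<le> real R"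
    and unity: "\<And>t. (\<Sum>\<^sub>\<infinity>k\<in>(UNIV::int set). \<phi> (t - real_of_int k)) = 1"
    and \<psi>: "\<psi> \<in> borel_measurable lborel" "integrable lborel (\<lambda>t. (\<psi> t)\<^sup>2)"
    and supp\<psi>: "\<And>s. \<psi> s \<noteq> 0 \<Longrightarrow> s \<le> A"
    and J: "J > 0"
    and orth: "\<And>k::int. (LINT s|lborel. \<psi> s * \<phi> (J * s - real_of_int k)) = 0"
  shows "\<bar>LINT s|lborel. \<psi> s * indicator {a<..} s\<bar> \<le>
    (real R + 1 + (LINT t|lborel. (\<psi> t)\<^sup>2)
      + (2 * real R + 1) * ((LINT t|lborel. (\<psi> t)\<^sup>2) + (LINT t|lborel. (\<phi> t)\<^sup>2))) / (2 * sqrt J)"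
proof -
  define \<Psi> where "\<Psi> = (LINT t|lborel. (\<psi> t)\<^sup>2)"
  define \<Phi> where "\<Phi> = (LINT t|lborel. (\<phi> t)\<^sup>2)"
  define \<delta> where "\<delta> = (real R + 1) / J"
  define N where "N = {\<lfloor>J * a\<rfloor> + 1..\<lfloor>J * a\<rfloor> + 2 * int R + 1}"
  define E where "E = {a - \<delta>..a + \<delta>}"
  define t where "t = 1 / sqrt J"
  note [measurable] = \<phi>(1) \<psi>(1)
  \<comment> \<open>the AM-GM weight that makes both terms of each bound O(1/sqrt J)\<close>
  have t: "t > 0" "t * \<Psi> = \<Psi> / sqrt J" "\<delta> / t = (real R + 1) / sqrt J" "\<Phi> / J / t = \<Phi> / sqrt J"
    using J by (auto simp: t_def \<delta>_def field_simps real_sqrt_mult[symmetric])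
  have "\<bar>LINT s|lborel. \<psi> s * indicator {a<..a + \<delta>} s\<bar> \<le> (t * \<Psi> + \<delta> / t) / 2"
    using abs_integral_mult_le[OF \<psi> _ _ t(1), of "indicator {a<..a + \<delta>}"] J
    by (simp add: \<Psi>_def \<delta>_def integrable_indicator_iff)
  then have boundary: "\<bar>LINT s|lborel. \<psi> s * indicator {a<..a + \<delta>} s\<bar> \<le> (\<Psi> + (real R + 1)) / (2 * sqrt J)"
    by (simp add: t add_divide_distrib)
  have cell: "\<bar>LINT s|lborel. \<psi> s * indicator E s * \<phi> (J * s - real_of_int k)\<bar> \<le> (\<Psi> + \<Phi>) / (2 * sqrt J)"
    for k
  proof -
    have "\<bar>LINT s|lborel. \<psi> s * indicator E s * \<phi> (J * s - real_of_int k)\<bar>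
        \<le> (t * (LINT s|lborel. (\<psi> s * indicator E s)\<^sup>2) + (LINT s|lborel. (\<phi> (J * s - real_of_int k))\<^sup>2) / t) / 2"
      by (rule abs_integral_mult_le[OF _ integrable_square_mult_indicator[OF \<psi>] _
            integrable_square_dilated[OF J \<phi>(2)] t(1)]) (simp_all add: E_def)
    also have "\<dots> \<le> (t * \<Psi> + \<Phi> / J / t) / 2"
      using mult_left_mono[OF integral_square_mult_indicator_le[OF \<psi>, of E]] t(1) J
      by (simp add: integral_square_dilated \<Psi>_def \<Phi>_def E_def)
    finally show ?thesis
      unfolding t(2,4) by (simp add: add_divide_distrib)
  qed
  have split: "(LINT s|lborel. \<psi> s * indicator {a<..} s) = (LINT s|lborel. \<psi> s * indicator {a<..a + \<delta>} s)
      - (\<Sum>k\<in>N. LINT s|lborel. \<psi> s * indicator E s * \<phi> (J * s - real_of_int k))"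
    unfolding \<delta>_def N_def E_def
    by (rule integral_greaterThan_eq_boundary_terms[OF \<phi> supp\<phi> unity \<psi> supp\<psi> J orth])
  have "\<bar>LINT s|lborel. \<psi> s * indicator {a<..} s\<bar> \<le> \<bar>LINT s|lborel. \<psi> s * indicator {a<..a + \<delta>} s\<bar>
      + (\<Sum>k\<in>N. \<bar>LINT s|lborel. \<psi> s * indicator E s * \<phi> (J * s - real_of_int k)\<bar>)"
    unfolding split by (rule order_trans[OF abs_triangle_ineq4 add_left_mono[OF sum_abs]])
  also have "\<dots> \<le> (\<Psi> + (real R + 1)) / (2 * sqrt J) + (\<Sum>k\<in>N. (\<Psi> + \<Phi>) / (2 * sqrt J))"
    using boundary cell by (intro add_mono sum_mono)
  also have "\<dots> = (real R + 1 + \<Psi> + (2 * real R + 1) * (\<Psi> + \<Phi>)) / (2 * sqrt J)"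
    using J by (simp add: N_def field_simps)
  finally show ?thesis
    unfolding \<Psi>_def \<Phi>_def .
qed

lemma nonpos_if_le_div_sqrt_unbounded:
  fixes x C :: real
  assumes "\<And>n::nat. \<exists>J > real n. x \<le> C / sqrt J"
  shows "x \<le> 0"
proof (rule ccontr)
  assume "\<not> x \<le> 0"
  obtain n :: nat where n: "(C / x)\<^sup>2 < real n"
    using reals_Archimedean2 by blast
  then obtain J where J: "real n < J" "x \<le> C / sqrt J"
    using assms by blast
  have "C / x \<le> sqrt ((C / x)\<^sup>2)"
    by (metis abs_ge_self real_sqrt_abs)
  also have "\<dots> < sqrt J"
    by (rule real_sqrt_less_mono) (use n J(1) in linarith)
  finally have "C < x * sqrt J"
    using \<open>\<not> x \<le> 0\<close> by (simp add: divide_less_eq mult.commute)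
  moreover have "sqrt J > 0"
    using J(1) of_nat_0_le_iff[of n] by simp
  ultimately show False
    using J(2) by (simp add: le_divide_eq)
qed

lemma integral_greaterThan_eq_0_if_orthogonal_dilates:
  fixes \<phi> \<psi> :: "real \<Rightarrow> real" and R :: nat and A :: real
  assumes \<phi>: "\<phi> \<in> borel_measurable lborel" "integrable lborel (\<lambda>t. (\<phi> t)\<^sup>2)"
    and supp\<phi>: "\<And>t. \<phi> t \<noteq> 0 \<Longrightarrow> \<bar>t\<bar> \<le> real R"
    and unity: "\<And>t. (\<Sum>\<^sub>\<infinity>k\<in>(UNIV::int set). \<phi> (t - real_of_int k)) = 1"
    and \<psi>: "\<psi> \<in> borel_measurable lborel" "integrable lborel (\<lambda>t. (\<psi> t)\<^sup>2)"
    and supp\<psi>: "\<And>s. \<psi> s \<noteq> 0 \<Longrightarrow> s \<le> A"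
    and orth: "\<And>n::nat. \<exists>J > real n. \<forall>k::int. (LINT s|lborel. \<psi> s * \<phi> (J * s - real_of_int k)) = 0"
  shows "(LINT s|lborel. \<psi> s * indicator {a<..} s) = 0"
proof -
  define C where "C = (real R + 1 + (LINT t|lborel. (\<psi> t)\<^sup>2)
    + (2 * real R + 1) * ((LINT t|lborel. (\<psi> t)\<^sup>2) + (LINT t|lborel. (\<phi> t)\<^sup>2))) / 2"
  have "\<exists>J > real n. \<bar>LINT s|lborel. \<psi> s * indicator {a<..} s\<bar> \<le> C / sqrt J" for n :: nat
  proof -
    obtain J where J: "real n < J" "\<And>k::int. (LINT s|lborel. \<psi> s * \<phi> (J * s - real_of_int k)) = 0"
      using orth by blast
    have "\<bar>LINT s|lborel. \<psi> s * indicator {a<..} s\<bar> \<le>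
        (real R + 1 + (LINT t|lborel. (\<psi> t)\<^sup>2)
          + (2 * real R + 1) * ((LINT t|lborel. (\<psi> t)\<^sup>2) + (LINT t|lborel. (\<phi> t)\<^sup>2)))
        / (2 * sqrt J)"
      using J by (intro abs_integral_greaterThan_le[OF \<phi> supp\<phi> unity \<psi> supp\<psi>]) auto
    then show ?thesis
      using J(1) by (auto simp: C_def)
  qed
  then have "\<bar>LINT s|lborel. \<psi> s * indicator {a<..} s\<bar> \<le> 0"
    by (rule nonpos_if_le_div_sqrt_unbounded)
  then show ?thesis
    by simp
qed

lemma emeasure_density_greaterThan:
  fixes f :: "real \<Rightarrow> real"
  assumes int: "integrable lborel f" and nonneg: "\<And>x. 0 \<le> f x"
  shows "emeasure (density lborel f) {a<..} = ennreal (LINT x|lborel. f x * indicator {a<..} x)"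
proof -
  have "emeasure (density lborel f) {a<..} = (\<integral>\<^sup>+ x. ennreal (f x * indicator {a<..} x) \<partial>lborel)"
    using int by (subst emeasure_density) (auto intro!: nn_integral_cong simp: indicator_def)
  also have "\<dots> = ennreal (LINT x|lborel. f x * indicator {a<..} x)"
    using int nonneg by (intro nn_integral_eq_integral integrable_real_mult_indicator) auto
  finally show ?thesis .
qed

lemma AE_eq_0_if_integral_greaterThan_eq_0:
  fixes f :: "real \<Rightarrow> real"
  assumes int: "integrable lborel f"
    and zero: "\<And>a. (LINT x|lborel. f x * indicator {a<..} x) = 0"
  shows "AE x in lborel. f x = 0"
proof -
  define P where "P x = max 0 (f x)" for x
  define Q where "Q x = max 0 (- f x)" for x
  have P: "integrable lborel P" "\<And>x. 0 \<le> P x" and Q: "integrable lborel Q" "\<And>x. 0 \<le> Q x"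
    unfolding P_def Q_def using int by auto
  have "(LINT x|lborel. P x * indicator {a<..} x) = (LINT x|lborel. Q x * indicator {a<..} x)" for a
  proof -
    have "(LINT x|lborel. P x * indicator {a<..} x) - (LINT x|lborel. Q x * indicator {a<..} x)
        = (LINT x|lborel. P x * indicator {a<..} x - Q x * indicator {a<..} x)"
      by (intro Bochner_Integration.integral_diff[symmetric] integrable_real_mult_indicator P Q) simp_all
    also have "\<dots> = (LINT x|lborel. f x * indicator {a<..} x)"
      by (intro Bochner_Integration.integral_cong) (auto simp: P_def Q_def indicator_def)
    finally have "(LINT x|lborel. P x * indicator {a<..} x) - (LINT x|lborel. Q x * indicator {a<..} x)
        = (LINT x|lborel. f x * indicator {a<..} x)" .
    then show ?thesis
      using zero by simp
  qed
  then have "density lborel P = density lborel Q"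
    by (intro measure_eqI_lessThan) (auto simp: emeasure_density_greaterThan P Q)
  then have "AE x in lborel. ennreal (P x) = ennreal (Q x)"
    using P Q by (intro finite_density_unique[THEN iffD1]) (auto simp: nn_integral_eq_integral)
  then show ?thesis
    by (rule AE_mp) (auto intro!: AE_I2 simp: P_def Q_def)
qed

theorem corollary4:
  fixes \<phi> \<psi> :: "real \<Rightarrow> real" and M :: nat and \<alpha> :: real
  assumes L2: "L2 \<phi>" "L2 \<psi>"
    and W1: "compactly_supported \<phi>" "compactly_supported \<psi>"
            "integrable lborel \<phi>" "integrable lborel \<psi>"
            "fourier \<phi> 0 = 1" "(LINT t|lborel. (\<psi> t)\<^sup>2) = 1"
    and W2: "\<exists>C. \<forall>\<xi>. cmod (fourier \<psi> \<xi>) * (1 + \<bar>\<xi>\<bar>) powr \<alpha> \<le> C"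
    and W3: "\<forall>m<M. (LINT t|lborel. t ^ m * \<psi> t) = 0"
    and W4: "\<forall>m<M. \<exists>p :: real poly. degree p = m \<and>
               (\<forall>t. (\<Sum>\<^sub>\<infinity>k\<in>(UNIV::int set). real_of_int k ^ m * \<phi> (t - real_of_int k)) = poly p t)"
    and M: "M \<ge> 1" and \<alpha>: "\<alpha> > 1"
  shows "\<exists>j0::nat. \<forall>j\<ge>j0. \<exists>lam. Hpoly \<phi> \<psi> j lam \<noteq> 0"
proof (rule ccontr)
  assume "\<not> ?thesis"
  then have vanishing: "\<exists>j\<ge>j0. \<forall>lam. Hpoly \<phi> \<psi> j lam = 0" for j0
    by auto
  obtain R :: nat where supp\<phi>: "\<And>t. \<phi> t \<noteq> 0 \<Longrightarrow> \<bar>t\<bar> \<le> real R"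
    using compactly_supported_imp_support_bound[OF W1(1)] by blast
  obtain B :: nat where supp\<psi>: "\<And>t. \<psi> t \<noteq> 0 \<Longrightarrow> \<bar>t\<bar> \<le> real B"
    using compactly_supported_imp_support_bound[OF W1(2)] by blast
  have \<phi>: "\<phi> \<in> borel_measurable lborel" "integrable lborel (\<lambda>t. (\<phi> t)\<^sup>2)"
    and \<psi>: "\<psi> \<in> borel_measurable lborel" "integrable lborel (\<lambda>t. (\<psi> t)\<^sup>2)"
    using L2 unfolding L2_def by auto
  obtain p :: "real poly" where "degree p = 0"
    and p: "\<And>t. (\<Sum>\<^sub>\<infinity>k\<in>(UNIV::int set). real_of_int k ^ 0 * \<phi> (t - real_of_int k)) = poly p t"
    using W4 M by auto
  then obtain c where "p = [:c:]"
    by (metis degree_0_id)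
  then have "(\<Sum>\<^sub>\<infinity>k\<in>(UNIV::int set). \<phi> (t - real_of_int k)) = c" for t
    using p[of t] by simp
  then have unity: "(\<Sum>\<^sub>\<infinity>k\<in>(UNIV::int set). \<phi> (t - real_of_int k)) = 1" for t
    using integral_eq_translates_sum[OF W1(3) supp\<phi>] W1(5) by (simp add: fourier_def)
  have supp\<psi>_above: "\<And>s. \<psi> s \<noteq> 0 \<Longrightarrow> s \<le> real B"
    using supp\<psi> abs_le_D1 by blast
  have "(LINT s|lborel. \<psi> s * indicator {a<..} s) = 0" for a
    by (rule integral_greaterThan_eq_0_if_orthogonal_dilates[OF \<phi> supp\<phi> unity \<psi> supp\<psi>_above
          orthogonal_dilates_if_Hpoly_frequently_eq_0[OF supp\<phi> supp\<psi> vanishing]])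
  then have "AE x in lborel. \<psi> x = 0"
    by (rule AE_eq_0_if_integral_greaterThan_eq_0[OF W1(4)])
  then have "(LINT t|lborel. (\<psi> t)\<^sup>2) = 0"
    by (intro integral_eq_zero_AE) auto
  with W1(6) show False
    by simp
qed

end
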